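(* Let $(x(t),y(t))$ be any trajectory of system (5), and define $\Psi(t)=\max_{i\in\mathcal V_F}|x_i(t)|^2_{\mathcal L(y(t))}$ and $q(t)=\max_{i\in\mathcal V_L}|u_i(y(t),t)|+\max_{i\in\mathcal V_F}|w_i(t)|$. Then for all $t\ge0$ the upper Dini derivative satisfies $D^+\sqrt{\Psi(t)}\le q(t)$, where $D^+h(t)=\limsup_{s\to0^+}\frac{h(t+s)-h(t)}{s}$.
   Context: Standing setup. Fix integers $n\ge 2$, $k\ge 1$, $d\ge 1$. The follower set is $\mathcal V_F=\{1,\dots,n\}$ and the leader set is $\mathcal V_L=\{\hat 1,\dots,\hat k\}$ (disjoint from $\mathcal V_F$); $\mathcal V=\mathcal V_F\cup\mathcal V_L$. The interaction topology is a time-varying digraph $\mathcal G_{\sigma(t)}=(\mathcal V,\mathcal E_{\sigma(t)})$, where $\sigma:[0,\infty)\to\mathcal P$ is a piecewise constant switching signal taking values in a finite set $\mathcal P$ of digraphs on $\mathcal V$; no arc of any of these digraphs enters a leader. An arc $(j,i)$ means that $i$ receives information from $j$. Dwell-time assumption: any two consecutive switching instants of $\sigma$ are separated by at least $\tau_D>0$. For $i\in\mathcal V_F$, $N_i(\sigma(t))=\{j\in\mathcal V_F:(j,i)\in\mathcal E_{\sigma(t)}\}$ and $L_i(\sigma(t))=\{j\in\mathcal V_L:(j,i)\in\mathcal E_{\sigma(t)}\}$. System (5): $\dot y_i=u_i(y,t)$ for $i=1,\dots,k$, and $\dot x_i=\sum_{j\in N_i(\sigma(t))}a_{ij}(x,y,t)(x_j-x_i)+\sum_{j\in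 L_i(\sigma(t))}b_{ij}(x,y,t)(y_j-x_i)+w_i(t)$ for $i=1,\dots,n$, where $x_i,y_j\in\mathbb R^d$, $x=(x_1,\dots,x_n)$, $y=(y_1,\dots,y_k)$; each $u_i(y,t)$ is continuous in $y$ and piecewise continuous in $t$; each $w_i$ is continuous; the weights $a_{ij},b_{ij}$ are continuous and satisfy $a_*\le a_{ij}(x,y,t)\le a^*$, $b_{ij}(x,y,t)\ge b_*$ for all $x,y,t$, with constants $0<a_*\le a^*$, $b_*>0$. Set notation: $|\cdot|$ is the Euclidean norm; for a closed convex $K\subset\mathbb R^d$, $|v|_K=\inf_{p\in K}|v-p|$; $\mathcal L(y(t))=\mathrm{co}\{y_1(t),\dots,y_k(t)\}$ (convex hull). *)

theory Defs
  imports "HOL-Analysis.Analysis"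
begin

text \<open>Vertices: Inl i is follower i (i in 1..n), Inr j is leader hat j (j in 1..k).
  A digraph is given by its arc set; an arc (j,i) means i receives information from j.\<close>

type_synonym vertex = "nat + nat"
type_synonym digraph = "(vertex \<times> vertex) set"

definition vertices :: "nat \<Rightarrow> nat \<Rightarrow> vertex set" where
  "vertices n k = Inl ` {1..n} \<union> Inr ` {1..k}"

definition admissible_digraph :: "nat \<Rightarrow> nat \<Rightarrow> digraph \<Rightarrow> bool" where
  "admissible_digraph n k E \<longleftrightarrow>
     E \<subseteq> vertices n k \<times> vertices n k \<and> (\<forall>e\<in>E. \<forall>j. snd e \<noteq> Inr j)"

definition N_F :: "nat \<Rightarrow> digraph \<Rightarrow> nat \<Rightarrow> nat set" where
  "N_F n E i = {j \<in> {1..n}. (Inl j, Inl i) \<in> E}"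

definition L_L :: "nat \<Rightarrow> digraph \<Rightarrow> nat \<Rightarrow> nat set" where
  "L_L k E i = {j \<in> {1..k}. (Inr j, Inl i) \<in> E}"

definition switching_signal :: "digraph set \<Rightarrow> real \<Rightarrow> (real \<Rightarrow> digraph) \<Rightarrow> bool" where
  "switching_signal P tauD \<sigma> \<longleftrightarrow>
     (\<forall>t\<ge>0. \<sigma> t \<in> P) \<and>
     (\<exists>D. D \<subseteq> {0<..} \<and> (\<forall>a\<in>D. \<forall>b\<in>D. a \<noteq> b \<longrightarrow> \<bar>a - b\<bar> \<ge> tauD) \<and>
          (\<forall>t1 t2. 0 \<le> t1 \<longrightarrow> t1 < t2 \<longrightarrow> {t1<..<t2} \<inter> D = {} \<longrightarrow>
                (\<forall>s\<in>{t1..<t2}. \<sigma> s = \<sigma> t1)))"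

definition piecewise_continuous :: "(real \<Rightarrow> 'a::topological_space) \<Rightarrow> bool" where
  "piecewise_continuous f \<longleftrightarrow>
     (\<forall>T\<ge>0. \<exists>S. finite S \<and> continuous_on ({0..T} - S) f \<and>
        (\<forall>s\<in>S. (\<exists>l. (f \<longlongrightarrow> l) (at_left s)) \<and> (\<exists>l. (f \<longlongrightarrow> l) (at_right s))))"

definition upper_dini :: "(real \<Rightarrow> real) \<Rightarrow> real \<Rightarrow> ereal" where
  "upper_dini h t = Limsup (at_right 0) (\<lambda>s. ereal ((h (t + s) - h t) / s))"

text \<open>Trajectory of system (5) on [0,\<infinity>): x i t, y j t; solution in the sense that x, y are
  continuous on [0,\<infinity>) and the right derivative at every t \<ge> 0 equals the right-hand side.\<close>
definition trajectory5 ::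
  "nat \<Rightarrow> nat \<Rightarrow> (real \<Rightarrow> digraph)
   \<Rightarrow> (nat \<Rightarrow> (nat \<Rightarrow> 'a::euclidean_space) \<Rightarrow> real \<Rightarrow> 'a)
   \<Rightarrow> (nat \<Rightarrow> nat \<Rightarrow> (nat \<Rightarrow> 'a) \<Rightarrow> (nat \<Rightarrow> 'a) \<Rightarrow> real \<Rightarrow> real)
   \<Rightarrow> (nat \<Rightarrow> nat \<Rightarrow> (nat \<Rightarrow> 'a) \<Rightarrow> (nat \<Rightarrow> 'a) \<Rightarrow> real \<Rightarrow> real)
   \<Rightarrow> (nat \<Rightarrow> real \<Rightarrow> 'a)
   \<Rightarrow> (nat \<Rightarrow> real \<Rightarrow> 'a) \<Rightarrow> (nat \<Rightarrow> real \<Rightarrow> 'a) \<Rightarrow> bool" where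
  "trajectory5 n k \<sigma> u a b w x y \<longleftrightarrow>
     (\<forall>i\<in>{1..n}. continuous_on {0..} (x i)) \<and>
     (\<forall>j\<in>{1..k}. continuous_on {0..} (y j)) \<and>
     (\<forall>t\<ge>0. \<forall>j\<in>{1..k}.
        (y j has_vector_derivative u j (\<lambda>l. y l t) t) (at t within {t..})) \<and>
     (\<forall>t\<ge>0. \<forall>i\<in>{1..n}.
        (x i has_vector_derivative
           (\<Sum>j\<in>N_F n (\<sigma> t) i. a i j (\<lambda>l. x l t) (\<lambda>l. y l t) t *\<^sub>R (x j t - x i t))
         + (\<Sum>j\<in>L_L k (\<sigma> t) i. b i j (\<lambda>l. x l t) (\<lambda>l. y l t) t *\<^sub>R (y j t - x i t))
         + w i t) (at t within {t..}))"

end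

theory Submission
  imports Defs
begin

(* Write D = max_i dist(x_i(t), K(t)); the quantity in the theorem is sqrt(max d_i^2) = max d_i.
   Two geometric facts drive the proof.  First, the set {v. dist(v, K) <= D} is convex, and it
   contains every x_j(t) and every y_j(t).  For small h > 0 the explicit Euler step
   x_i(t) + h * (sum of a_ij (x_j - x_i) + sum of b_ij (y_j - x_i)) is a convex combination of
   these points, so it stays in that set; the disturbance w_i adds at most h |w_i|.  Second,
   moving every leader by at most h*U moves the distance to their convex hull by at most h*U.
   The derivatives make both first-order approximations exact up to e*h for any e > 0, which
   bounds the upper Dini derivative by q + e, hence by q.

   The
   estimate at a fixed time combines them; the theorem itself only adds that the interaction
   weights, being bounded below by positive constants, are nonnegative. *)

lemma convex_infdist_sublevel:
  fixes K :: "'a::euclidean_space set"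
  assumes "convex K" "closed K" "K \<noteq> {}"
  shows "convex {v. infdist v K \<le> D}"
proof (rule convexI)
  fix v1 v2 and t1 t2 :: real
  assume v1: "v1 \<in> {v. infdist v K \<le> D}" and v2: "v2 \<in> {v. infdist v K \<le> D}"
    and t: "0 \<le> t1" "0 \<le> t2" "t1 + t2 = 1"
  obtain p1 where p1: "p1 \<in> K" "infdist v1 K = dist v1 p1"
    using infdist_attains_inf[OF assms(2,3)] by blast
  obtain p2 where p2: "p2 \<in> K" "infdist v2 K = dist v2 p2"
    using infdist_attains_inf[OF assms(2,3)] by blast
  have p_in: "t1 *\<^sub>R p1 + t2 *\<^sub>R p2 \<in> K"
    using convexD[OF assms(1) p1(1) p2(1) t] .
  have "dist (t1 *\<^sub>R v1 + t2 *\<^sub>R v2) (t1 *\<^sub>R p1 + t2 *\<^sub>R p2)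
      = norm (t1 *\<^sub>R (v1 - p1) + t2 *\<^sub>R (v2 - p2))"
    by (simp add: dist_norm algebra_simps)
  also have "\<dots> \<le> norm (t1 *\<^sub>R (v1 - p1)) + norm (t2 *\<^sub>R (v2 - p2))"
    by (rule norm_triangle_ineq)
  also have "\<dots> = t1 * dist v1 p1 + t2 * dist v2 p2"
    using t by (simp add: dist_norm)
  also have "\<dots> \<le> t1 * D + t2 * D"
    using v1 v2 p1 p2 t by (intro add_mono mult_left_mono) auto
  also have "\<dots> = D" using t by (metis distrib_right mult_1)
  finally show "t1 *\<^sub>R v1 + t2 *\<^sub>R v2 \<in> {v. infdist v K \<le> D}"
    using infdist_le[OF p_in, of "t1 *\<^sub>R v1 + t2 *\<^sub>R v2"] by simp
qed

text \<open>Moving from a point z of a convex set towards points of the set, with nonnegative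
  weights of total mass at most 1, stays inside the set: the result is the convex
  combination with weight 1 - (sum of weights) on z.\<close>
lemma convex_step_towards:
  fixes S :: "'a::real_vector set"
  assumes "convex S" "z \<in> S" "finite A" "\<forall>m\<in>A. 0 \<le> c m" "sum c A \<le> 1" "\<forall>m\<in>A. p m \<in> S"
  shows "z + (\<Sum>m\<in>A. c m *\<^sub>R (p m - z)) \<in> S"
proof -
  define \<mu> where "\<mu> = case_option (1 - sum c A) c"
  define q where "q = case_option z p"
  have fin: "finite (insert None (Some ` A))" using assms(3) by simp
  have none: "None \<notin> Some ` A" by auto
  have inj: "inj_on Some A" by simp
  have total: "(\<Sum>m\<in>insert None (Some ` A). \<mu> m) = 1"
    using assms(3) none by (simp add: sum.insert sum.reindex[OF inj] \<mu>_def o_def)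
  have "(\<Sum>m\<in>insert None (Some ` A). \<mu> m *\<^sub>R q m) \<in> S"
    by (rule convex_sum[OF fin assms(1) total]) (use assms in \<open>auto simp: \<mu>_def q_def\<close>)
  moreover have "(\<Sum>m\<in>insert None (Some ` A). \<mu> m *\<^sub>R q m)
      = (1 - sum c A) *\<^sub>R z + (\<Sum>m\<in>A. c m *\<^sub>R p m)"
    using assms(3) none by (simp add: sum.insert sum.reindex[OF inj] \<mu>_def q_def o_def)
  moreover have "z + (\<Sum>m\<in>A. c m *\<^sub>R (p m - z)) = (1 - sum c A) *\<^sub>R z + (\<Sum>m\<in>A. c m *\<^sub>R p m)"
    by (simp add: scaleR_diff_right sum_subtractf scaleR_sum_left algebra_simps)
  ultimately show ?thesis by simp
qed

lemma infdist_convex_hull_perturb: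
  fixes f g :: "'i \<Rightarrow> 'a::euclidean_space"
  assumes "finite J" "J \<noteq> {}" "\<forall>j\<in>J. dist (f j) (g j) \<le> M"
  shows "infdist z (convex hull (f ` J)) \<le> infdist z (convex hull (g ` J)) + M"
proof -
  define Kf where "Kf = convex hull (f ` J)"
  have Kf: "convex Kf" "closed Kf" "Kf \<noteq> {}"
    unfolding Kf_def using assms(1,2)
    by (auto simp: compact_convex_hull compact_imp_closed finite_imp_compact)
  have near: "convex hull (g ` J) \<subseteq> {v. infdist v Kf \<le> M}"
  proof (rule hull_minimal)
    show "g ` J \<subseteq> {v. infdist v Kf \<le> M}"
    proof
      fix v assume "v \<in> g ` J"
      then obtain j where j: "j \<in> J" "v = g j" by auto
      have "f j \<in> Kf" unfolding Kf_def using j by (simp add: hull_inc)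
      then show "v \<in> {v. infdist v Kf \<le> M}"
        using infdist_le2[of "f j" Kf "g j" M] j assms(3) by (simp add: dist_commute)
    qed
  qed (rule convex_infdist_sublevel[OF Kf])
  have "closed (convex hull (g ` J))" "convex hull (g ` J) \<noteq> {}"
    using assms(1,2) by (auto simp: compact_convex_hull compact_imp_closed finite_imp_compact)
  then obtain p where p: "p \<in> convex hull (g ` J)" "infdist z (convex hull (g ` J)) = dist z p"
    using infdist_attains_inf by blast
  have "infdist z Kf \<le> infdist p Kf + dist z p" by (rule infdist_triangle)
  also have "\<dots> \<le> M + dist z p" using near p by auto
  finally show ?thesis using p by (simp add: Kf_def)
qed

lemma consensus_step_infdist:
  fixes K :: "'a::euclidean_space set"
  assumes K: "convex K" "closed K" "K \<noteq> {}"
    and z: "infdist z K \<le> D"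
    and A: "finite A" "\<forall>j\<in>A. 0 \<le> c j \<and> infdist (p j) K \<le> D"
    and B: "finite B" "\<forall>j\<in>B. 0 \<le> d j \<and> infdist (q j) K \<le> D"
    and h: "0 \<le> h" "h * (sum c A + sum d B) \<le> 1"
  shows "infdist (z + h *\<^sub>R ((\<Sum>j\<in>A. c j *\<^sub>R (p j - z)) + (\<Sum>j\<in>B. d j *\<^sub>R (q j - z)) + v)) K
           \<le> D + h * norm v"
proof -
  define g where "g = (\<Sum>j\<in>A. c j *\<^sub>R (p j - z)) + (\<Sum>j\<in>B. d j *\<^sub>R (q j - z))"
  have split: "(\<Sum>m\<in>A <+> B. (h * case_sum c d m) *\<^sub>R (case_sum p q m - z)) = h *\<^sub>R g"
    using A(1) B(1) by (simp add: sum.Plus o_def g_def scaleR_sum_right scaleR_add_right)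
  have "z + (\<Sum>m\<in>A <+> B. (h * case_sum c d m) *\<^sub>R (case_sum p q m - z)) \<in> {v. infdist v K \<le> D}"
  proof (rule convex_step_towards[OF convex_infdist_sublevel[OF K]])
    show "sum (\<lambda>m. h * case_sum c d m) (A <+> B) \<le> 1"
      using A(1) B(1) h(2) by (simp add: sum.Plus o_def sum_distrib_left distrib_left)
  qed (use z A B h(1) in auto)
  then have "infdist (z + h *\<^sub>R g) K \<le> D" by (simp add: split)
  moreover have "infdist (z + h *\<^sub>R (g + v)) K \<le> infdist (z + h *\<^sub>R g) K + h * norm v"
    using infdist_triangle[of "z + h *\<^sub>R (g + v)" K "z + h *\<^sub>R g"] h(1)
    by (simp add: dist_norm scaleR_add_right)
  ultimately show ?thesis by (simp add: g_def)
qed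

lemma right_derivative_eventually:
  fixes f :: "real \<Rightarrow> 'a::real_normed_vector"
  assumes "(f has_vector_derivative f') (at t within {t..})" "0 < e"
  shows "\<forall>\<^sub>F h in at_right 0. dist (f (t + h)) (f t + h *\<^sub>R f') \<le> e * h"
proof -
  from assms(1) have "(f has_derivative (\<lambda>h. h *\<^sub>R f')) (at t within {t..})"
    by (simp add: has_vector_derivative_def)
  then obtain \<delta> where \<delta>: "\<delta> > 0" "\<forall>s\<in>{t..}. norm (s - t) < \<delta> \<longrightarrow>
      norm (f s - f t - (s - t) *\<^sub>R f') \<le> e * norm (s - t)"
    unfolding has_derivative_within_alt using assms(2) by blast
  show ?thesis
    using eventually_at_right_real[OF \<delta>(1)]
  proof (rule eventually_mono)
    fix h assume "h \<in> {0<..<\<delta>}"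
    then show "dist (f (t + h)) (f t + h *\<^sub>R f') \<le> e * h"
      using \<delta>(2)[rule_format, of "t + h"] by (simp add: dist_norm algebra_simps)
  qed
qed

lemma eventually_step_small:
  fixes C :: real
  shows "\<forall>\<^sub>F h in at_right 0. h * C \<le> 1"
proof -
  have "((\<lambda>h. h * C) \<longlongrightarrow> 0 * C) (at_right 0)"
    by (intro tendsto_intros)
  then have "\<forall>\<^sub>F h in at_right 0. h * C < 1"
    by (rule order_tendstoD) simp
  then show ?thesis by (rule eventually_mono) simp
qed

lemma upper_dini_le:
  assumes "\<And>e. 0 < e \<Longrightarrow> \<forall>\<^sub>F h in at_right 0. f (t + h) \<le> f t + h * (q + e)"
  shows "upper_dini f t \<le> ereal q"
proof (rule ereal_le_epsilon2)
  fix e :: real assume e: "0 < e"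
  have "\<forall>\<^sub>F h in at_right 0. ereal ((f (t + h) - f t) / h) \<le> ereal (q + e)"
    using assms[OF e] eventually_at_right_less[of 0]
    by eventually_elim (simp add: pos_divide_le_eq algebra_simps)
  then have "upper_dini f t \<le> ereal (q + e)"
    unfolding upper_dini_def by (rule Limsup_bounded)
  then show "upper_dini f t \<le> ereal q + ereal e" by simp
qed

lemma sqrt_Max_squares:
  fixes d :: "'i \<Rightarrow> real"
  assumes "finite I" "I \<noteq> {}" "\<forall>i\<in>I. 0 \<le> d i"
  shows "sqrt (Max ((\<lambda>i. (d i)\<^sup>2) ` I)) = Max (d ` I)"
proof -
  have "Max (d ` I) \<in> d ` I" using assms(1,2) by simp
  then obtain i0 where i0: "i0 \<in> I" "Max (d ` I) = d i0" by auto
  have le: "d i \<le> d i0" if "i \<in> I" for i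
    using i0(2) Max_ge[of "d ` I" "d i"] assms(1) that by simp
  have "Max ((\<lambda>i. (d i)\<^sup>2) ` I) = (d i0)\<^sup>2"
  proof (rule antisym)
    show "Max ((\<lambda>i. (d i)\<^sup>2) ` I) \<le> (d i0)\<^sup>2"
      using assms le by (auto simp: Max_le_iff intro!: power_mono)
    show "(d i0)\<^sup>2 \<le> Max ((\<lambda>i. (d i)\<^sup>2) ` I)"
      using assms(1) i0(1) by (intro Max_ge) auto
  qed
  then show ?thesis using i0 assms(3) by simp
qed

lemma infdist_along_right_derivative:
  fixes f :: "real \<Rightarrow> 'a::real_normed_vector"
  assumes "(f has_vector_derivative f') (at t within {t..})" "0 < e"
    and "\<forall>\<^sub>F h in at_right 0. infdist (f t + h *\<^sub>R f') K \<le> B h"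
  shows "\<forall>\<^sub>F h in at_right 0. infdist (f (t + h)) K \<le> B h + e * h"
  using right_derivative_eventually[OF assms(1,2)] assms(3)
proof eventually_elim
  case (elim h)
  then show ?case
    using infdist_triangle[of "f (t + h)" K "f t + h *\<^sub>R f'"] by simp
qed

lemma convex_hull_motion:
  fixes y :: "'i \<Rightarrow> real \<Rightarrow> 'a::euclidean_space"
  assumes "finite J" "J \<noteq> {}" "0 < e"
    and "\<forall>j\<in>J. (y j has_vector_derivative y' j) (at t within {t..}) \<and> norm (y' j) \<le> U"
  shows "\<forall>\<^sub>F h in at_right 0. \<forall>z. infdist z (convex hull ((\<lambda>j. y j (t + h)) ` J))
           \<le> infdist z (convex hull ((\<lambda>j. y j t) ` J)) + h * (U + e)"
proof -
  have "\<forall>\<^sub>F h in at_right 0. \<forall>j\<in>J. dist (y j (t + h)) (y j t + h *\<^sub>R y' j) \<le> e * h"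
    using assms by (intro eventually_ball_finite ballI right_derivative_eventually) auto
  then show ?thesis
    using eventually_at_right_less[of 0]
  proof eventually_elim
    case (elim h)
    have "dist (y j (t + h)) (y j t) \<le> h * (U + e)" if j: "j \<in> J" for j
    proof -
      have "dist (y j (t + h)) (y j t)
          \<le> dist (y j (t + h)) (y j t + h *\<^sub>R y' j) + dist (y j t + h *\<^sub>R y' j) (y j t)"
        by (rule dist_triangle)
      also have "\<dots> \<le> e * h + h * U"
        using elim j assms(4) by (intro add_mono) (auto simp: dist_norm intro!: mult_left_mono)
      finally show ?thesis by (simp add: algebra_simps)
    qed
    then show ?case
      using assms(1,2) by (intro allI infdist_convex_hull_perturb) auto
  qed
qed

lemma trajectory5_upper_dini_at:
  fixes u :: "nat \<Rightarrow> (nat \<Rightarrow> 'a::euclidean_space) \<Rightarrow> real \<Rightarrow> 'a"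
    and a b :: "nat \<Rightarrow> nat \<Rightarrow> (nat \<Rightarrow> 'a) \<Rightarrow> (nat \<Rightarrow> 'a) \<Rightarrow> real \<Rightarrow> real"
    and w x y :: "nat \<Rightarrow> real \<Rightarrow> 'a"
  assumes n: "n \<ge> 1" and k: "k \<ge> 1"
    and a_nn: "\<forall>i\<in>{1..n}. \<forall>j\<in>{1..n}. \<forall>X Y t. 0 \<le> a i j X Y t"
    and b_nn: "\<forall>i\<in>{1..n}. \<forall>j\<in>{1..k}. \<forall>X Y t. 0 \<le> b i j X Y t"
    and traj: "trajectory5 n k \<sigma> u a b w x y"
    and t: "t \<ge> 0"
  shows "upper_dini (\<lambda>s. sqrt (Max ((\<lambda>i. (infdist (x i s) (convex hull (\<lambda>j. y j s) ` {1..k}))\<^sup>2) ` {1..n}))) t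
       \<le> ereal (Max ((\<lambda>i. norm (u i (\<lambda>j. y j t) t)) ` {1..k}) + Max ((\<lambda>i. norm (w i t)) ` {1..n}))"
proof -
  define X Y where "X = (\<lambda>l. x l t)" and "Y = (\<lambda>l. y l t)"
  define K where "K s = convex hull ((\<lambda>j. y j s) ` {1..k})" for s
  define dist_max where "dist_max s = Max ((\<lambda>i. infdist (x i s) (K s)) ` {1..n})" for s
  define D where "D = dist_max t"
  define U where "U = Max ((\<lambda>j. norm (u j Y t)) ` {1..k})"
  define W where "W = Max ((\<lambda>i. norm (w i t)) ` {1..n})"
  define N L where "N i = N_F n (\<sigma> t) i" and "L i = L_L k (\<sigma> t) i" for i
  define v where "v i = (\<Sum>j\<in>N i. a i j X Y t *\<^sub>R (x j t - x i t))
      + (\<Sum>j\<in>L i. b i j X Y t *\<^sub>R (y j t - x i t)) + w i t" for i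
  have N: "N i \<subseteq> {1..n}" and L: "L i \<subseteq> {1..k}" for i
    by (auto simp: N_def L_def N_F_def L_L_def)
  from traj t have dy: "\<forall>j\<in>{1..k}. (y j has_vector_derivative u j Y t) (at t within {t..})"
    and dx: "\<forall>i\<in>{1..n}. (x i has_vector_derivative v i) (at t within {t..})"
    unfolding trajectory5_def X_def Y_def v_def N_def L_def by auto
  have K: "convex (K t)" "closed (K t)" "K t \<noteq> {}"
    unfolding K_def using k by (auto simp: compact_convex_hull compact_imp_closed finite_imp_compact)
  have x_near: "infdist (x i t) (K t) \<le> D" if "i \<in> {1..n}" for i
    using that by (auto simp: D_def dist_max_def intro: Max_ge)
  have y_near: "infdist (y j t) (K t) \<le> D" if "j \<in> {1..k}" for j
  proof -
    have "y j t \<in> K t" unfolding K_def using that by (simp add: hull_inc)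
    moreover have "0 \<le> D" using x_near[of 1] n infdist_nonneg[of "x 1 t" "K t"] by simp
    ultimately show ?thesis by simp
  qed
  have follower_nbrs: "finite (N i) \<and> (\<forall>j\<in>N i. 0 \<le> a i j X Y t \<and> infdist (x j t) (K t) \<le> D)"
    if "i \<in> {1..n}" for i
    using that N[of i] a_nn x_near finite_subset[OF N[of i]] by blast
  have leader_nbrs: "finite (L i) \<and> (\<forall>j\<in>L i. 0 \<le> b i j X Y t \<and> infdist (y j t) (K t) \<le> D)"
    if "i \<in> {1..n}" for i
    using that L[of i] b_nn y_near finite_subset[OF L[of i]] by blast
  text \<open>The followers, measured against the frozen hull K(t): first the Euler step, which is
    a consensus step as soon as h is small, then the true positions.\<close>
  have euler: "\<forall>\<^sub>F h in at_right 0. infdist (x i t + h *\<^sub>R v i) (K t) \<le> D + h * W"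
    if i: "i \<in> {1..n}" for i
    using eventually_step_small[of "sum (\<lambda>j. a i j X Y t) (N i) + sum (\<lambda>j. b i j X Y t) (L i)"]
      eventually_at_right_less[of 0]
  proof eventually_elim
    case (elim h)
    have "infdist (x i t + h *\<^sub>R v i) (K t) \<le> D + h * norm (w i t)"
      unfolding v_def
      by (rule consensus_step_infdist[OF K x_near[OF i]])
        (use elim follower_nbrs[OF i] leader_nbrs[OF i] in auto)
    also have "\<dots> \<le> D + h * W"
      using elim i by (auto simp: W_def intro!: mult_left_mono Max_ge)
    finally show ?case .
  qed
  have followers: "\<forall>\<^sub>F h in at_right 0. \<forall>i\<in>{1..n}. infdist (x i (t + h)) (K t) \<le> D + h * (W + e / 2)"
    if e: "0 < e" for e
  proof (intro eventually_ball_finite ballI)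
    fix i assume i: "i \<in> {1..n}"
    have "0 < e / 2" using e by simp
    from infdist_along_right_derivative[OF dx[rule_format, OF i] this euler[OF i]]
    show "\<forall>\<^sub>F h in at_right 0. infdist (x i (t + h)) (K t) \<le> D + h * (W + e / 2)"
      by (simp add: algebra_simps)
  qed simp
  have leaders: "\<forall>\<^sub>F h in at_right 0. \<forall>z. infdist z (K (t + h)) \<le> infdist z (K t) + h * (U + e / 2)"
    if e: "0 < e" for e
    unfolding K_def using k e dy
    by (intro convex_hull_motion) (auto simp: U_def intro: Max_ge)
  have growth: "\<forall>\<^sub>F h in at_right 0. dist_max (t + h) \<le> D + h * (U + W + e)" if e: "0 < e" for e
    using followers[OF e] leaders[OF e]
  proof eventually_elim
    case (elim h)
    have "infdist (x i (t + h)) (K (t + h)) \<le> D + h * (U + W + e)" if "i \<in> {1..n}" for i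
      using elim(1)[rule_format, OF that] elim(2)[rule_format, of "x i (t + h)"]
      by (simp add: algebra_simps)
    then show ?case
      using n by (simp add: dist_max_def Max_le_iff)
  qed
  have "upper_dini dist_max t \<le> ereal (U + W)"
    by (rule upper_dini_le) (use growth in \<open>simp add: D_def algebra_simps\<close>)
  moreover have "(\<lambda>s. sqrt (Max ((\<lambda>i. (infdist (x i s) (convex hull (\<lambda>j. y j s) ` {1..k}))\<^sup>2) ` {1..n})))
      = dist_max"
    using n by (auto simp: fun_eq_iff dist_max_def K_def infdist_nonneg sqrt_Max_squares)
  ultimately show ?thesis by (simp add: U_def W_def Y_def)
qed

theorem lemma4:
  fixes n k :: nat and P :: "digraph set" and \<sigma> :: "real \<Rightarrow> digraph" and tauD :: real
    and u :: "nat \<Rightarrow> (nat \<Rightarrow> 'a::euclidean_space) \<Rightarrow> real \<Rightarrow> 'a"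
    and a b :: "nat \<Rightarrow> nat \<Rightarrow> (nat \<Rightarrow> 'a) \<Rightarrow> (nat \<Rightarrow> 'a) \<Rightarrow> real \<Rightarrow> real"
    and w :: "nat \<Rightarrow> real \<Rightarrow> 'a"
    and a_low a_up b_low :: real
    and x y :: "nat \<Rightarrow> real \<Rightarrow> 'a"
  assumes n: "n \<ge> 2" and k: "k \<ge> 1"
    and P: "finite P" "\<forall>E\<in>P. admissible_digraph n k E"
    and tauD: "tauD > 0"
    and sigma: "switching_signal P tauD \<sigma>"
    and u_cont: "\<forall>i\<in>{1..k}. \<forall>t. continuous_on UNIV (\<lambda>z. u i z t)"
    and u_pw: "\<forall>i\<in>{1..k}. \<forall>z. piecewise_continuous (u i z)"
    and w_cont: "\<forall>i\<in>{1..n}. continuous_on UNIV (w i)"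
    and constants: "0 < a_low" "a_low \<le> a_up" "0 < b_low"
    and a_cont: "\<forall>i\<in>{1..n}. \<forall>j\<in>{1..n}.
        continuous_on UNIV (\<lambda>(p::(nat \<Rightarrow> 'a) \<times> (nat \<Rightarrow> 'a) \<times> real). a i j (fst p) (fst (snd p)) (snd (snd p)))"
    and b_cont: "\<forall>i\<in>{1..n}. \<forall>j\<in>{1..k}.
        continuous_on UNIV (\<lambda>(p::(nat \<Rightarrow> 'a) \<times> (nat \<Rightarrow> 'a) \<times> real). b i j (fst p) (fst (snd p)) (snd (snd p)))"
    and a_bnd: "\<forall>i\<in>{1..n}. \<forall>j\<in>{1..n}. \<forall>X Y t. a_low \<le> a i j X Y t \<and> a i j X Y t \<le> a_up"
    and b_bnd: "\<forall>i\<in>{1..n}. \<forall>j\<in>{1..k}. \<forall>X Y t. b_low \<le> b i j X Y t"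
    and traj: "trajectory5 n k \<sigma> u a b w x y"
  shows "\<forall>t\<ge>0.
     upper_dini (\<lambda>s. sqrt (Max ((\<lambda>i. (infdist (x i s) (convex hull (\<lambda>j. y j s) ` {1..k}))\<^sup>2) ` {1..n}))) t
       \<le> ereal (Max ((\<lambda>i. norm (u i (\<lambda>j. y j t) t)) ` {1..k}) + Max ((\<lambda>i. norm (w i t)) ` {1..n}))"
proof -
  have "\<forall>i\<in>{1..n}. \<forall>j\<in>{1..n}. \<forall>X Y t. 0 \<le> a i j X Y t"
    using a_bnd constants by (meson order_trans less_imp_le)
  moreover have "\<forall>i\<in>{1..n}. \<forall>j\<in>{1..k}. \<forall>X Y t. 0 \<le> b i j X Y t"
    using b_bnd constants by (meson order_trans less_imp_le)
  ultimately show ?thesis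
    using n k traj by (intro allI impI trajectory5_upper_dini_at) auto
qed

end
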